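(* Every strictly positive formula $A$ is $\mathbf{RJ}$-equivalent (i.e. $A\vdash_{\mathbf{RJ}}A'$ and $A'\vdash_{\mathbf{RJ}}A$) to an ordered formula $A'$.
   Context: Strictly positive formulas: $A::= p\mid \top\mid (A\land B)\mid \alpha A$, $\alpha\le\omega$. $\mathbf{RJ}$: $A\vdash A$; $A\vdash\top$; cut; $A\land B\vdash A$; $A\land B\vdash B$; from $A\vdash B$, $A\vdash C$ infer $A\vdash B\land C$; from $A\vdash B$ infer $\alpha A\vdash\alpha B$; $\alpha\alpha A\vdash\alpha A$; $\alpha\beta A\vdash\beta A$, $\beta\alpha A\vdash\beta A$ for $\alpha\ge\beta$; $\alpha A\land\beta B\vdash\alpha(A\land\beta B)$ for $\alpha>\beta$. ${\mathcal L}_{\ge m}$ is the set of strictly positive formulas all of whose modalities lie in $[m,\omega]$. A fact is $\top$ or a conjunction of variables. Ordered formulas are defined inductively: $A$ is ordered if $A=F\land\bigwedge_{i<k}m_iA_i$ for some $k\ge0$ (with $A=F$ if $k=0$), where $F$ is a fact, each $A_i\in{\mathcal L}_{\ge m_i}$ is ordered, and $m_0\ge m_1\ge\dots\ge m_{k-1}$. *)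

theory Defs
  imports Main "HOL-Library.Extended_Nat"
begin

text \<open>Strictly positive formulas; modalities are ordinals alpha \<le> omega,
  represented as extended naturals (enat, with \<infinity> standing for omega).\<close>
datatype 'a fm = Var 'a | Top | Conj "'a fm" "'a fm" | Dia enat "'a fm"

inductive RJ :: "'a fm \<Rightarrow> 'a fm \<Rightarrow> bool" (infix "\<turnstile>" 50) where
  refl: "A \<turnstile> A"
| top: "A \<turnstile> Top"
| cut: "A \<turnstile> B \<Longrightarrow> B \<turnstile> C \<Longrightarrow> A \<turnstile> C"
| conjE1: "Conj A B \<turnstile> A"
| conjE2: "Conj A B \<turnstile> B"
| conjI: "A \<turnstile> B \<Longrightarrow> A \<turnstile> C \<Longrightarrow> A \<turnstile> Conj B C"
| mono: "A \<turnstile> B \<Longrightarrow> Dia \<alpha> A \<turnstile> Dia \<alpha> B"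
| trans4: "Dia \<alpha> (Dia \<alpha> A) \<turnstile> Dia \<alpha> A"
| absorb1: "\<alpha> \<ge> \<beta> \<Longrightarrow> Dia \<alpha> (Dia \<beta> A) \<turnstile> Dia \<beta> A"
| absorb2: "\<alpha> \<ge> \<beta> \<Longrightarrow> Dia \<beta> (Dia \<alpha> A) \<turnstile> Dia \<beta> A"
| pull: "\<alpha> > \<beta> \<Longrightarrow> Conj (Dia \<alpha> A) (Dia \<beta> B) \<turnstile> Dia \<alpha> (Conj A (Dia \<beta> B))"

fun mods :: "'a fm \<Rightarrow> enat set" where
  "mods (Var p) = {}"
| "mods Top = {}"
| "mods (Conj A B) = mods A \<union> mods B"
| "mods (Dia \<alpha> A) = insert \<alpha> (mods A)"

definition L_ge :: "enat \<Rightarrow> 'a fm set" where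
  "L_ge m = {A. \<forall>\<alpha>\<in>mods A. m \<le> \<alpha>}"

inductive var_conj :: "'a fm \<Rightarrow> bool" where
  "var_conj (Var p)"
| "var_conj A \<Longrightarrow> var_conj B \<Longrightarrow> var_conj (Conj A B)"

definition is_fact :: "'a fm \<Rightarrow> bool" where
  "is_fact F \<longleftrightarrow> F = Top \<or> var_conj F"

fun conjs :: "'a fm list \<Rightarrow> 'a fm" where
  "conjs [] = Top"
| "conjs [A] = A"
| "conjs (A # As) = Conj A (conjs As)"

inductive ordered :: "'a fm \<Rightarrow> bool" where
  fact: "is_fact F \<Longrightarrow> ordered F"
| step: "is_fact F \<Longrightarrow> xs \<noteq> [] \<Longrightarrow>
     (\<forall>i<length xs. ordered (snd (xs ! i)) \<and> snd (xs ! i) \<in> L_ge (fst (xs ! i))) \<Longrightarrow>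
     sorted_wrt (\<ge>) (map fst xs) \<Longrightarrow>
     ordered (Conj F (conjs (map (\<lambda>(m, B). Dia m B) xs)))"

end

theory Submission
  imports Defs
begin

text \<open>By induction on \<open>A\<close> one shows that \<open>A\<close> is equivalent to \<open>F \<and> \<And>\<^sub>i m\<^sub>i A\<^sub>i\<close> with \<open>F\<close> a fact,
  the \<open>A\<^sub>i\<close> ordered, \<open>A\<^sub>i \<in> L\<^sub>\<ge>\<^sub>m\<^sub>i\<close> and the \<open>m\<^sub>i\<close> non-increasing. For \<open>A \<and> B\<close> the facts are
  conjoined and the two lists of modal conjuncts merged and re-sorted. For \<open>\<alpha> A\<close> the
  conjuncts \<open>m B\<close> of \<open>A\<close> with \<open>m \<ge> \<alpha>\<close> stay under \<open>\<alpha>\<close>, while those with \<open>m < \<alpha>\<close> move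
  outside: \<open>\<alpha> m B \<turnstile> m B\<close> is an absorption axiom, and the converse direction is the axiom
  \<open>\<alpha> X \<and> m B \<turnstile> \<alpha> (X \<and> m B)\<close> for \<open>\<alpha> > m\<close>.\<close>

definition RJ_equiv :: "'a fm \<Rightarrow> 'a fm \<Rightarrow> bool" (infix "\<stileturn>\<turnstile>" 50) where
  "A \<stileturn>\<turnstile> B \<longleftrightarrow> A \<turnstile> B \<and> B \<turnstile> A"

declare RJ.cut [trans]

lemma RJ_equiv_trans [trans]: "A \<stileturn>\<turnstile> B \<Longrightarrow> B \<stileturn>\<turnstile> C \<Longrightarrow> A \<stileturn>\<turnstile> C"
  unfolding RJ_equiv_def by (meson RJ.cut)

lemma Conj_entailsI1: "A \<turnstile> C \<Longrightarrow> Conj A B \<turnstile> C"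
  by (rule RJ.cut[OF conjE1])

lemma Conj_entailsI2: "B \<turnstile> C \<Longrightarrow> Conj A B \<turnstile> C"
  by (rule RJ.cut[OF conjE2])

lemma entails_Conj_iff [simp]: "X \<turnstile> Conj A B \<longleftrightarrow> X \<turnstile> A \<and> X \<turnstile> B"
  by (meson RJ.conjI RJ.cut conjE1 conjE2)

lemma RJ_equiv_Conj: "A \<stileturn>\<turnstile> A' \<Longrightarrow> B \<stileturn>\<turnstile> B' \<Longrightarrow> Conj A B \<stileturn>\<turnstile> Conj A' B'"
  unfolding RJ_equiv_def by (simp add: Conj_entailsI1 Conj_entailsI2)

lemma RJ_equiv_Dia: "A \<stileturn>\<turnstile> A' \<Longrightarrow> Dia \<alpha> A \<stileturn>\<turnstile> Dia \<alpha> A'"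
  unfolding RJ_equiv_def by (simp add: RJ.mono)

lemma conjs_entails: "A \<in> set As \<Longrightarrow> conjs As \<turnstile> A"
  by (induction As rule: conjs.induct) (auto intro: RJ.refl Conj_entailsI1 Conj_entailsI2)

lemma entails_conjs_iff: "X \<turnstile> conjs As \<longleftrightarrow> (\<forall>A\<in>set As. X \<turnstile> A)"
  by (induction As rule: conjs.induct) (auto intro: RJ.top RJ.cut conjs_entails)

definition dias :: "(enat \<times> 'a fm) list \<Rightarrow> 'a fm" where
  "dias xs = conjs (map (\<lambda>(m, B). Dia m B) xs)"

lemma dias_entails: "(m, B) \<in> set xs \<Longrightarrow> dias xs \<turnstile> Dia m B"
  unfolding dias_def by (rule conjs_entails) force

lemma entails_dias_iff [simp]: "X \<turnstile> dias xs \<longleftrightarrow> (\<forall>m B. (m, B) \<in> set xs \<longrightarrow> X \<turnstile> Dia m B)"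
  unfolding dias_def entails_conjs_iff by auto

lemma Conj_dias_entails: "(m, B) \<in> set xs \<Longrightarrow> Conj X (dias xs) \<turnstile> Dia m B"
  by (rule Conj_entailsI2[OF dias_entails])

lemma dias_Nil [simp]: "dias [] = Top"
  by (simp add: dias_def)

lemma Dia_Conj_dias_pull:
  assumes "\<forall>(m, B)\<in>set S. m < \<alpha>"
  shows "Conj (Dia \<alpha> X) (dias S) \<turnstile> Dia \<alpha> (Conj X (dias S))"
  using assms
proof (induction S arbitrary: X)
  case Nil
  show ?case by (simp add: Conj_entailsI1 RJ.mono RJ.refl RJ.top)
next
  case (Cons x S)
  obtain m B where x: "x = (m, B)" by fastforce
  with Cons.prems have "m < \<alpha>" and S: "\<forall>(m, B)\<in>set S. m < \<alpha>" by auto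
  have "Conj (Dia \<alpha> X) (dias (x # S)) \<turnstile> Conj (Conj (Dia \<alpha> X) (Dia m B)) (dias S)"
    using x by (auto intro: conjE1 simp: Conj_dias_entails)
  also have "\<dots> \<turnstile> Conj (Dia \<alpha> (Conj X (Dia m B))) (dias S)"
    by (rule RJ.conjI[OF Conj_entailsI1[OF pull[OF \<open>m < \<alpha>\<close>]] conjE2])
  also have "\<dots> \<turnstile> Dia \<alpha> (Conj (Conj X (Dia m B)) (dias S))"
    using Cons.IH[OF S] .
  also have "\<dots> \<turnstile> Dia \<alpha> (Conj X (dias (x # S)))"
    using x by (intro RJ.mono) (auto intro: Conj_entailsI1 conjE1 conjE2 Conj_dias_entails)
  finally show ?case .
qed

lemma Dia_Conj_dias_equiv:
  assumes "set xs = set P \<union> set S" and "\<forall>(m, B)\<in>set S. m < \<alpha>"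
  shows "Dia \<alpha> (Conj F (dias xs)) \<stileturn>\<turnstile> Conj (Dia \<alpha> (Conj F (dias P))) (dias S)"
  unfolding RJ_equiv_def
proof
  have "Dia \<alpha> (Conj F (dias xs)) \<turnstile> Dia m B" if "(m, B) \<in> set S" for m B
  proof -
    have "Dia \<alpha> (Conj F (dias xs)) \<turnstile> Dia \<alpha> (Dia m B)"
      using that assms(1) by (intro RJ.mono Conj_dias_entails) auto
    moreover have "Dia \<alpha> (Dia m B) \<turnstile> Dia m B"
      using that assms(2) by (intro absorb1) force
    ultimately show ?thesis by (rule RJ.cut)
  qed
  moreover have "Dia \<alpha> (Conj F (dias xs)) \<turnstile> Dia \<alpha> (Conj F (dias P))"
    using assms(1) by (intro RJ.mono) (auto intro: conjE1 Conj_dias_entails)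
  ultimately show "Dia \<alpha> (Conj F (dias xs)) \<turnstile> Conj (Dia \<alpha> (Conj F (dias P))) (dias S)"
    by auto
next
  have "Conj (Conj F (dias P)) (dias S) \<turnstile> Conj F (dias xs)"
    using assms(1) by (auto intro: Conj_entailsI1 conjE1 Conj_dias_entails)
  then show "Conj (Dia \<alpha> (Conj F (dias P))) (dias S) \<turnstile> Dia \<alpha> (Conj F (dias xs))"
    using Dia_Conj_dias_pull[OF assms(2)] by (meson RJ.cut RJ.mono)
qed

lemma Conj_dias_merge_equiv:
  assumes "set xs = set xs\<^sub>1 \<union> set xs\<^sub>2"
  shows "Conj (Conj F\<^sub>1 (dias xs\<^sub>1)) (Conj F\<^sub>2 (dias xs\<^sub>2)) \<stileturn>\<turnstile> Conj (Conj F\<^sub>1 F\<^sub>2) (dias xs)"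
  using assms unfolding RJ_equiv_def
  by (auto intro: Conj_entailsI1 Conj_entailsI2 conjE1 conjE2 Conj_dias_entails)

lemma mods_var_conj: "var_conj F \<Longrightarrow> mods F = {}"
  by (induction rule: var_conj.induct) auto

lemma mods_fact: "is_fact F \<Longrightarrow> mods F = {}"
  unfolding is_fact_def using mods_var_conj by auto

lemma mods_conjs: "mods (conjs As) \<subseteq> \<Union>(mods ` set As)"
  by (induction As rule: conjs.induct) auto

text \<open>Facts are not closed under \<open>Conj\<close>, since \<open>Conj Top (Var p)\<close> is not one; \<open>fact_conj\<close>
  drops a \<open>Top\<close> operand.\<close>

definition fact_conj :: "'a fm \<Rightarrow> 'a fm \<Rightarrow> 'a fm" where
  "fact_conj F\<^sub>1 F\<^sub>2 = (if F\<^sub>1 = Top then F\<^sub>2 else if F\<^sub>2 = Top then F\<^sub>1 else Conj F\<^sub>1 F\<^sub>2)"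

lemma is_fact_fact_conj: "is_fact F\<^sub>1 \<Longrightarrow> is_fact F\<^sub>2 \<Longrightarrow> is_fact (fact_conj F\<^sub>1 F\<^sub>2)"
  unfolding fact_conj_def is_fact_def by (auto intro: var_conj.intros)

lemma Conj_equiv_fact_conj: "Conj F\<^sub>1 F\<^sub>2 \<stileturn>\<turnstile> fact_conj F\<^sub>1 F\<^sub>2"
  unfolding fact_conj_def RJ_equiv_def by (auto intro: RJ.refl RJ.top conjE1 conjE2)

definition ordered_components :: "'a fm \<Rightarrow> (enat \<times> 'a fm) list \<Rightarrow> bool" where
  "ordered_components F xs \<longleftrightarrow> is_fact F \<and> (\<forall>(m, B)\<in>set xs. ordered B \<and> B \<in> L_ge m)
     \<and> sorted_wrt (\<ge>) (map fst xs)"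

definition ordered_of :: "'a fm \<Rightarrow> (enat \<times> 'a fm) list \<Rightarrow> 'a fm" where
  "ordered_of F xs = (if xs = [] then F else Conj F (dias xs))"

lemma ordered_ordered_of:
  assumes "ordered_components F xs"
  shows "ordered (ordered_of F xs)"
proof (cases "xs = []")
  case True
  then show ?thesis
    using assms by (simp add: ordered_of_def ordered_components_def ordered.fact)
next
  case False
  have "\<forall>i<length xs. ordered (snd (xs ! i)) \<and> snd (xs ! i) \<in> L_ge (fst (xs ! i))"
    using assms nth_mem unfolding ordered_components_def by fastforce
  then show ?thesis
    using assms False unfolding ordered_of_def dias_def ordered_components_def
    by (auto intro: ordered.step)
qed

lemma Conj_dias_equiv_ordered_of: "Conj F (dias xs) \<stileturn>\<turnstile> ordered_of F xs"
  unfolding ordered_of_def RJ_equiv_def by (auto intro: RJ.refl RJ.top conjE1 Conj_dias_entails)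

lemma ordered_of_L_ge:
  assumes "ordered_components F xs" and "\<forall>(m, B)\<in>set xs. \<alpha> \<le> m"
  shows "ordered_of F xs \<in> L_ge \<alpha>"
proof -
  have "mods (ordered_of F xs) \<subseteq> (\<Union>(m, B)\<in>set xs. insert m (mods B))"
    using assms(1) mods_fact mods_conjs[of "map (\<lambda>(m, B). Dia m B) xs"]
    unfolding ordered_components_def ordered_of_def dias_def by fastforce
  moreover have "\<alpha> \<le> \<beta>" if "(m, B) \<in> set xs" "\<beta> \<in> insert m (mods B)" for m B \<beta>
    using that assms unfolding ordered_components_def L_ge_def by (fastforce intro: order_trans)
  ultimately show ?thesis
    unfolding L_ge_def by blast
qed

lemma sorted_wrt_ge_rev_sort_key: "sorted_wrt (\<ge>) (map fst (rev (sort_key fst xs)))"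
proof -
  have "sorted_wrt (\<le>) (map fst (sort_key fst xs))"
    using sorted_sort_key[of fst xs] by (simp add: sorted_wrt_iff_nth_less)
  then show ?thesis
    by (simp add: rev_map[symmetric] sorted_wrt_rev)
qed

lemma ordered_components_Conj:
  assumes "ordered_components F\<^sub>1 xs\<^sub>1" and "ordered_components F\<^sub>2 xs\<^sub>2"
  shows "ordered_components (fact_conj F\<^sub>1 F\<^sub>2) (rev (sort_key fst (xs\<^sub>1 @ xs\<^sub>2)))"
  using assms sorted_wrt_ge_rev_sort_key[of "xs\<^sub>1 @ xs\<^sub>2"]
  unfolding ordered_components_def by (auto intro: is_fact_fact_conj)

lemma ordered_components_Dia:
  assumes "ordered_components F xs"
  shows "ordered_components Top
    ((\<alpha>, ordered_of F (filter (\<lambda>(m, B). \<alpha> \<le> m) xs)) # filter (\<lambda>(m, B). m < \<alpha>) xs)"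
proof -
  let ?P = "filter (\<lambda>(m, B). \<alpha> \<le> m) xs"
  have "ordered_components F ?P"
    using assms unfolding ordered_components_def by (auto simp: sorted_wrt_filter sorted_wrt_map)
  then have "ordered (ordered_of F ?P)" and "ordered_of F ?P \<in> L_ge \<alpha>"
    by (auto intro: ordered_ordered_of ordered_of_L_ge)
  then show ?thesis
    using assms unfolding ordered_components_def is_fact_def
    by (auto simp: sorted_wrt_filter sorted_wrt_map)
qed

lemma ordered_components_exist: "\<exists>F xs. ordered_components F xs \<and> A \<stileturn>\<turnstile> Conj F (dias xs)"
proof (induction A)
  case (Var p)
  have "ordered_components (Var p) []"
    by (simp add: ordered_components_def is_fact_def var_conj.intros)
  moreover have "Var p \<stileturn>\<turnstile> Conj (Var p) (dias [])"
    by (simp add: RJ_equiv_def RJ.refl RJ.top conjE1)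
  ultimately show ?case by blast
next
  case Top
  have "ordered_components Top []"
    by (simp add: ordered_components_def is_fact_def)
  moreover have "(Top :: 'a fm) \<stileturn>\<turnstile> Conj Top (dias [])"
    by (simp add: RJ_equiv_def RJ.top conjE1)
  ultimately show ?case by blast
next
  case (Conj A B)
  obtain F\<^sub>1 xs\<^sub>1 where 1: "ordered_components F\<^sub>1 xs\<^sub>1" "A \<stileturn>\<turnstile> Conj F\<^sub>1 (dias xs\<^sub>1)"
    using Conj.IH(1) by blast
  obtain F\<^sub>2 xs\<^sub>2 where 2: "ordered_components F\<^sub>2 xs\<^sub>2" "B \<stileturn>\<turnstile> Conj F\<^sub>2 (dias xs\<^sub>2)"
    using Conj.IH(2) by blast
  let ?xs = "rev (sort_key fst (xs\<^sub>1 @ xs\<^sub>2))"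
  have "Conj A B \<stileturn>\<turnstile> Conj (Conj F\<^sub>1 (dias xs\<^sub>1)) (Conj F\<^sub>2 (dias xs\<^sub>2))"
    using 1(2) 2(2) by (rule RJ_equiv_Conj)
  also have "\<dots> \<stileturn>\<turnstile> Conj (Conj F\<^sub>1 F\<^sub>2) (dias ?xs)"
    by (rule Conj_dias_merge_equiv) simp
  also have "\<dots> \<stileturn>\<turnstile> Conj (fact_conj F\<^sub>1 F\<^sub>2) (dias ?xs)"
    by (intro RJ_equiv_Conj Conj_equiv_fact_conj) (simp add: RJ_equiv_def RJ.refl)
  finally show ?case
    using ordered_components_Conj[OF 1(1) 2(1)] by blast
next
  case (Dia \<alpha> A)
  obtain F xs where h: "ordered_components F xs" "A \<stileturn>\<turnstile> Conj F (dias xs)"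
    using Dia.IH by blast
  let ?P = "filter (\<lambda>(m, B). \<alpha> \<le> m) xs" and ?S = "filter (\<lambda>(m, B). m < \<alpha>) xs"
  have "Dia \<alpha> A \<stileturn>\<turnstile> Dia \<alpha> (Conj F (dias xs))"
    using h(2) by (rule RJ_equiv_Dia)
  also have "\<dots> \<stileturn>\<turnstile> Conj (Dia \<alpha> (Conj F (dias ?P))) (dias ?S)"
    by (rule Dia_Conj_dias_equiv) auto
  also have "\<dots> \<stileturn>\<turnstile> Conj (Dia \<alpha> (ordered_of F ?P)) (dias ?S)"
    by (intro RJ_equiv_Conj RJ_equiv_Dia Conj_dias_equiv_ordered_of) (simp add: RJ_equiv_def RJ.refl)
  also have "\<dots> \<stileturn>\<turnstile> Conj Top (dias ((\<alpha>, ordered_of F ?P) # ?S))"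
    unfolding RJ_equiv_def by (auto intro: RJ.top conjE1 Conj_dias_entails Conj_entailsI2)
  finally show ?case
    using ordered_components_Dia[OF h(1)] by blast
qed

theorem lemma5p3:
  fixes A :: "'a fm"
  shows "\<exists>A'. ordered A' \<and> A \<turnstile> A' \<and> A' \<turnstile> A"
proof -
  obtain F xs where "ordered_components F xs" and "A \<stileturn>\<turnstile> Conj F (dias xs)"
    using ordered_components_exist by blast
  then have "ordered (ordered_of F xs)" and "A \<stileturn>\<turnstile> ordered_of F xs"
    using ordered_ordered_of RJ_equiv_trans Conj_dias_equiv_ordered_of by blast+
  then show ?thesis
    unfolding RJ_equiv_def by blast
qed

end
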